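(* Let $\Omega\subset\mathbb{R}^2$ be open and bounded with Lipschitz boundary, let $f\in L^2(\Omega)$ be not identically zero, and for $\lambda_1,\lambda_2>0$ let $(u^*,v^* )=(u^*_{\lambda_1,\lambda_2},v^*_{\lambda_1,\lambda_2})\in BV(\Omega)\times L^2(\Omega)$ be an optimal pair for $$\min_{u\in BV(\Omega),\,v\in L^2(\Omega)}\Big\{|Du|(\Omega)+\lambda_1\|v\|_{L^1(\Omega)}+\frac{\lambda_2}{2}\|f-u-v\|_{L^2(\Omega)}^2\Big\}.$$ Then: (i) for fixed finite $\lambda_2$, $v^*\to0$ in $L^1(\Omega)$ as $\lambda_1\to+\infty$; (ii) for fixed finite $\lambda_1$, $v^*\to f-u^*$ in $L^2(\Omega)$ (i.e. $\|f-u^*-v^*\|_{L^2(\Omega)}\to0$) as $\lambda_2\to+\infty$; (iii) if additionally $f\in BV(\Omega)$ and $f$ is not constant, then $(u^*,v^* )\to(f,0)$ in $L^1(\Omega)\times L^1(\Omega)$ as $\lambda_1,\lambda_2\to+\infty$.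
   Context: $|Du|(\Omega)$ denotes the total variation of $u$ and $BV(\Omega)$ the space of functions of bounded variation. *)

theory Defs
  imports "HOL-Analysis.Analysis"
begin

type_synonym R2 = "real ^ 2"

definition divergence :: "(R2 \<Rightarrow> R2) \<Rightarrow> R2 \<Rightarrow> real" where
  "divergence \<phi> x = (\<Sum>i\<in>UNIV. (frechet_derivative \<phi> (at x) (axis i 1)) $ i)"

definition test_fields :: "R2 set \<Rightarrow> (R2 \<Rightarrow> R2) set" where
  "test_fields \<Omega> = {\<phi>.
      (\<exists>\<phi>'. (\<forall>x. (\<phi> has_derivative \<phi>' x) (at x)) \<and>
            (\<forall>i. continuous_on UNIV (\<lambda>x. \<phi>' x (axis i 1)))) \<and>
      (\<exists>K. compact K \<and> K \<subseteq> \<Omega> \<and> (\<forall>x. x \<notin> K \<longrightarrow> \<phi> x = 0)) \<and>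
      (\<forall>x. norm (\<phi> x) \<le> 1)}"

definition total_variation :: "R2 set \<Rightarrow> (R2 \<Rightarrow> real) \<Rightarrow> ereal" where
  "total_variation \<Omega> u =
     (SUP \<phi>\<in>test_fields \<Omega>. ereal (LINT x:\<Omega>|lebesgue. u x * divergence \<phi> x))"

definition BV :: "R2 set \<Rightarrow> (R2 \<Rightarrow> real) \<Rightarrow> bool" where
  "BV \<Omega> u \<longleftrightarrow> set_integrable lebesgue \<Omega> u \<and> total_variation \<Omega> u < \<infinity>"

definition L2 :: "R2 set \<Rightarrow> (R2 \<Rightarrow> real) \<Rightarrow> bool" where
  "L2 \<Omega> f \<longleftrightarrow> set_borel_measurable lebesgue \<Omega> f \<and>
                set_integrable lebesgue \<Omega> (\<lambda>x. (f x)\<^sup>2)"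

definition lipschitz_boundary :: "R2 set \<Rightarrow> bool" where
  "lipschitz_boundary \<Omega> \<longleftrightarrow>
     (\<forall>p\<in>frontier \<Omega>. \<exists>r>0. \<exists>(R :: R2 \<Rightarrow> R2) g (L::real).
        orthogonal_transformation R \<and> L-lipschitz_on UNIV (g :: real \<Rightarrow> real) \<and>
        \<Omega> \<inter> ball p r = {x \<in> ball p r. (R (x - p)) $ 2 > g ((R (x - p)) $ 1)})"

definition energy :: "R2 set \<Rightarrow> (R2 \<Rightarrow> real) \<Rightarrow> real \<Rightarrow> real \<Rightarrow> (R2 \<Rightarrow> real) \<Rightarrow> (R2 \<Rightarrow> real) \<Rightarrow> ereal" where
  "energy \<Omega> f l1 l2 u v =
     total_variation \<Omega> u
     + ereal l1 * enn2ereal (\<integral>\<^sup>+x\<in>\<Omega>. ennreal \<bar>v x\<bar> \<partial>lebesgue)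
     + ereal (l2 / 2) * enn2ereal (\<integral>\<^sup>+x\<in>\<Omega>. ennreal ((f x - u x - v x)\<^sup>2) \<partial>lebesgue)"

definition optimal_pair :: "R2 set \<Rightarrow> (R2 \<Rightarrow> real) \<Rightarrow> real \<Rightarrow> real \<Rightarrow> (R2 \<Rightarrow> real) \<Rightarrow> (R2 \<Rightarrow> real) \<Rightarrow> bool" where
  "optimal_pair \<Omega> f l1 l2 u v \<longleftrightarrow>
     BV \<Omega> u \<and> L2 \<Omega> v \<and>
     (\<forall>u' v'. BV \<Omega> u' \<longrightarrow> L2 \<Omega> v' \<longrightarrow> energy \<Omega> f l1 l2 u v \<le> energy \<Omega> f l1 l2 u' v')"

end

theory Submission
  imports Defs
begin

text \<open>Comparing the optimal energy with that of the competitors \<open>(0, 0)\<close>, \<open>(0, f)\<close> and \<open>(f, 0)\<close>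
  bounds it by \<open>\<lambda>\<^sub>2/2 \<parallel>f\<parallel>\<^sub>2\<^sup>2\<close>, by \<open>\<lambda>\<^sub>1 \<parallel>f\<parallel>\<^sub>1\<close> and by \<open>|Df|(\<Omega>)\<close>. Since every term of the energy is
  nonnegative, this gives \<open>\<parallel>v\<parallel>\<^sub>1 = O(1/\<lambda>\<^sub>1)\<close> and \<open>\<parallel>f - u - v\<parallel>\<^sub>2\<^sup>2 = O(1/\<lambda>\<^sub>2)\<close>, which are (i) and (ii),
  and for \<open>f \<in> BV\<close> both at once. Finally \<open>|u - f| \<le> |v| + 1/(2s) + s/2 (f - u - v)\<^sup>2\<close> pointwise, and
  integrating with \<open>s = \<surd>\<lambda>\<^sub>2\<close> yields \<open>\<parallel>u - f\<parallel>\<^sub>1 = O(1/\<lambda>\<^sub>1 + 1/\<surd>\<lambda>\<^sub>2)\<close>.\<close>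

lemma divergence_zero [simp]: "divergence (\<lambda>x. 0) x = 0"
  unfolding divergence_def by simp

lemma zero_in_test_fields: "(\<lambda>x. 0) \<in> test_fields \<Omega>"
  unfolding test_fields_def
  by (auto intro!: exI[of _ "\<lambda>x h. 0"] exI[of _ "{}"])

lemma total_variation_nonneg: "0 \<le> total_variation \<Omega> u"
  unfolding total_variation_def
  using zero_in_test_fields by (intro SUP_upper2[of "\<lambda>x. 0"]) auto

lemma total_variation_zero [simp]: "total_variation \<Omega> (\<lambda>x. 0) = 0"
proof (rule antisym)
  show "total_variation \<Omega> (\<lambda>x. 0) \<le> 0"
    unfolding total_variation_def by (intro SUP_least) simp
qed (rule total_variation_nonneg)

lemma BV_zero: "BV \<Omega> (\<lambda>x. 0)"
  unfolding BV_def by simp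

lemma L2_zero: "L2 \<Omega> (\<lambda>x. 0)"
  unfolding L2_def set_borel_measurable_def set_integrable_def by simp

lemma BV_total_variation_real:
  assumes "BV \<Omega> u"
  obtains T where "0 \<le> T" "total_variation \<Omega> u = ereal T"
  using assms total_variation_nonneg[of \<Omega> u] unfolding BV_def
  by (cases "total_variation \<Omega> u") auto

lemma set_borel_measurable_iff_restrict_space:
  "A \<in> sets M \<Longrightarrow> set_borel_measurable M A f \<longleftrightarrow> f \<in> borel_measurable (restrict_space M A)"
  for f :: "'a \<Rightarrow> 'b::real_normed_vector"
  by (simp add: set_borel_measurable_def borel_measurable_restrict_space_iff)

lemma BV_set_borel_measurable: "BV \<Omega> u \<Longrightarrow> set_borel_measurable lebesgue \<Omega> u"
  unfolding BV_def set_integrable_def set_borel_measurable_def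
  by (auto dest: borel_measurable_integrable)

lemma set_lebesgue_integral_nonneg:
  fixes g :: "'a \<Rightarrow> real"
  shows "(\<And>x. x \<in> A \<Longrightarrow> 0 \<le> g x) \<Longrightarrow> 0 \<le> (LINT x:A|M. g x)"
  unfolding set_lebesgue_integral_def
  by (auto intro!: Bochner_Integration.integral_nonneg split: split_indicator)

lemma set_nn_integral_eq_set_integral:
  fixes g :: "'a \<Rightarrow> real"
  assumes "set_integrable M A g" "\<And>x. 0 \<le> g x"
  shows "(\<integral>\<^sup>+x\<in>A. ennreal (g x) \<partial>M) = ennreal (LINT x:A|M. g x)"
  using nn_integral_eq_integral[of M "\<lambda>x. indicator A x *\<^sub>R g x"] assms
  by (simp add: set_integrable_def set_lebesgue_integral_def nn_integral_set_ennreal mult.commute)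

lemma set_integral_real_bounded:
  fixes g :: "'a \<Rightarrow> real"
  assumes "0 \<le> r" "(\<integral>\<^sup>+x\<in>A. ennreal (g x) \<partial>M) \<le> ennreal r"
  shows "(LINT x:A|M. g x) \<le> r"
  using integral_real_bounded[of r M "\<lambda>x. indicator A x *\<^sub>R g x"] assms
  by (simp add: set_lebesgue_integral_def nn_integral_set_ennreal mult.commute)

lemma abs_le_Young:
  fixes b s :: real
  assumes "s > 0"
  shows "\<bar>b\<bar> \<le> 1 / (2 * s) + s / 2 * b\<^sup>2"
proof -
  have "0 \<le> (s * \<bar>b\<bar> - 1)\<^sup>2 / (2 * s)" using assms by simp
  also have "\<dots> = s / 2 * b\<^sup>2 + 1 / (2 * s) - \<bar>b\<bar>"
    using assms by (simp add: field_simps power2_eq_square)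
  finally show ?thesis by simp
qed

lemma L2_imp_set_integrable_abs:
  assumes "\<Omega> \<in> lmeasurable" "L2 \<Omega> f"
  shows "set_integrable lebesgue \<Omega> (\<lambda>x. \<bar>f x\<bar>)"
proof -
  have \<Omega>: "\<Omega> \<in> sets lebesgue" using assms(1) by (rule fmeasurableD)
  have "f \<in> borel_measurable (restrict_space lebesgue \<Omega>)"
    using assms(2) set_borel_measurable_iff_restrict_space[OF \<Omega>] unfolding L2_def by blast
  then have "(\<lambda>x. \<bar>f x\<bar>) \<in> borel_measurable (restrict_space lebesgue \<Omega>)" by measurable
  then have "set_borel_measurable lebesgue \<Omega> (\<lambda>x. \<bar>f x\<bar>)"
    using set_borel_measurable_iff_restrict_space[OF \<Omega>] by blast
  moreover have "integrable lebesgue (\<lambda>x. indicator \<Omega> x + indicator \<Omega> x *\<^sub>R (f x)\<^sup>2)"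
    using assms unfolding L2_def set_integrable_def
    by (intro Bochner_Integration.integrable_add integrable_real_indicator) (auto simp: fmeasurable_def)
  moreover have "\<bar>f x\<bar> \<le> 1 + (f x)\<^sup>2" for x
    using abs_le_Young[of 1 "f x"] by (simp add: add_increasing)
  ultimately show ?thesis unfolding set_integrable_def set_borel_measurable_def
    by (elim Bochner_Integration.integrable_bound) (auto split: split_indicator)
qed

lemma nn_integral_abs_le_Young:
  fixes w v g :: "'a \<Rightarrow> real"
  assumes [measurable]: "v \<in> borel_measurable M" "g \<in> borel_measurable M"
    and "s > 0" and "\<And>x. x \<in> space M \<Longrightarrow> \<bar>w x\<bar> \<le> \<bar>v x\<bar> + \<bar>g x\<bar>"
  shows "(\<integral>\<^sup>+x. \<bar>w x\<bar> \<partial>M) \<le>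
    (\<integral>\<^sup>+x. \<bar>v x\<bar> \<partial>M) + ennreal (1 / (2 * s)) * emeasure M (space M)
      + ennreal (s / 2) * (\<integral>\<^sup>+x. (g x)\<^sup>2 \<partial>M)"
proof -
  have "(\<integral>\<^sup>+x. \<bar>w x\<bar> \<partial>M) \<le>
      (\<integral>\<^sup>+x. ennreal \<bar>v x\<bar> + ennreal (1 / (2 * s)) + ennreal (s / 2) * ennreal ((g x)\<^sup>2) \<partial>M)"
  proof (rule nn_integral_mono)
    fix x assume "x \<in> space M"
    then have "\<bar>w x\<bar> \<le> \<bar>v x\<bar> + (1 / (2 * s) + s / 2 * (g x)\<^sup>2)"
      using assms(4) abs_le_Young[OF \<open>s > 0\<close>, of "g x"] by fastforce
    then have "ennreal \<bar>w x\<bar> \<le> ennreal (\<bar>v x\<bar> + 1 / (2 * s) + s / 2 * (g x)\<^sup>2)"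
      by (intro ennreal_leI) (simp add: add.assoc)
    also have "\<dots> = ennreal \<bar>v x\<bar> + ennreal (1 / (2 * s)) + ennreal (s / 2) * ennreal ((g x)\<^sup>2)"
      using \<open>s > 0\<close> by (simp add: ennreal_plus ennreal_mult[symmetric])
    finally show "ennreal \<bar>w x\<bar> \<le> \<dots>" .
  qed
  also have "\<dots> = (\<integral>\<^sup>+x. \<bar>v x\<bar> \<partial>M) + ennreal (1 / (2 * s)) * emeasure M (space M)
      + ennreal (s / 2) * (\<integral>\<^sup>+x. (g x)\<^sup>2 \<partial>M)"
    by (simp add: nn_integral_add nn_integral_cmult)
  finally show ?thesis .
qed

lemma ereal_weighted_summand_le:
  fixes a c :: ereal and A :: ennreal
  assumes "0 \<le> a" "0 \<le> c" "l > 0" "a + ereal l * enn2ereal A + c \<le> ereal K"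
  shows "A \<le> ennreal (K / l)"
proof -
  have "ereal l * enn2ereal A \<le> a + ereal l * enn2ereal A + c"
    using assms(1,2) by (metis add.commute add_increasing add_increasing2 order_refl)
  also have "\<dots> \<le> ereal K" by fact
  finally have le: "ereal l * enn2ereal A \<le> ereal K" .
  then obtain r where r: "enn2ereal A = ereal r" "0 \<le> r"
    using \<open>l > 0\<close> enn2ereal_nonneg[of A] by (cases "enn2ereal A") auto
  with le \<open>l > 0\<close> have "r \<le> K / l" by (simp add: field_simps)
  with r show ?thesis by (simp add: less_eq_ennreal.rep_eq)
qed

lemma optimal_pair_bounds:
  assumes opt: "optimal_pair \<Omega> f l1 l2 u v" and "l1 > 0" "l2 > 0"
    and "BV \<Omega> u'" "L2 \<Omega> v'" "energy \<Omega> f l1 l2 u' v' \<le> ereal K"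
  shows "(\<integral>\<^sup>+x\<in>\<Omega>. ennreal \<bar>v x\<bar> \<partial>lebesgue) \<le> ennreal (K / l1)"
    and "(\<integral>\<^sup>+x\<in>\<Omega>. ennreal ((f x - u x - v x)\<^sup>2) \<partial>lebesgue) \<le> ennreal (2 * K / l2)"
proof -
  have "energy \<Omega> f l1 l2 u v \<le> ereal K"
    using assms(1,4-6) unfolding optimal_pair_def by (blast intro: order_trans)
  then have E: "total_variation \<Omega> u + ereal l1 * enn2ereal (\<integral>\<^sup>+x\<in>\<Omega>. ennreal \<bar>v x\<bar> \<partial>lebesgue)
      + ereal (l2 / 2) * enn2ereal (\<integral>\<^sup>+x\<in>\<Omega>. ennreal ((f x - u x - v x)\<^sup>2) \<partial>lebesgue) \<le> ereal K"
    unfolding energy_def .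
  show "(\<integral>\<^sup>+x\<in>\<Omega>. ennreal \<bar>v x\<bar> \<partial>lebesgue) \<le> ennreal (K / l1)"
    by (rule ereal_weighted_summand_le[OF total_variation_nonneg _ \<open>l1 > 0\<close> E])
      (use \<open>l2 > 0\<close> in simp)
  have "(\<integral>\<^sup>+x\<in>\<Omega>. ennreal ((f x - u x - v x)\<^sup>2) \<partial>lebesgue) \<le> ennreal (K / (l2 / 2))"
    by (rule ereal_weighted_summand_le[where c = 0]) (use E total_variation_nonneg \<open>l1 > 0\<close> \<open>l2 > 0\<close> in simp_all)
  then show "(\<integral>\<^sup>+x\<in>\<Omega>. ennreal ((f x - u x - v x)\<^sup>2) \<partial>lebesgue) \<le> ennreal (2 * K / l2)"
    by (simp add: mult.commute)
qed

lemma energy_zero_zero: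
  assumes "L2 \<Omega> f"
  shows "energy \<Omega> f l1 l2 (\<lambda>x. 0) (\<lambda>x. 0) = ereal (l2 / 2 * (LINT x:\<Omega>|lebesgue. (f x)\<^sup>2))"
  using assms set_nn_integral_eq_set_integral[of lebesgue \<Omega> "\<lambda>x. (f x)\<^sup>2"]
    set_lebesgue_integral_nonneg[of \<Omega> "\<lambda>x. (f x)\<^sup>2" lebesgue]
  unfolding energy_def L2_def by (simp add: zero_ennreal.rep_eq)

lemma energy_zero_f:
  assumes "set_integrable lebesgue \<Omega> (\<lambda>x. \<bar>f x\<bar>)"
  shows "energy \<Omega> f l1 l2 (\<lambda>x. 0) f = ereal (l1 * (LINT x:\<Omega>|lebesgue. \<bar>f x\<bar>))"
  using assms set_nn_integral_eq_set_integral[of lebesgue \<Omega> "\<lambda>x. \<bar>f x\<bar>"]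
    set_lebesgue_integral_nonneg[of \<Omega> "\<lambda>x. \<bar>f x\<bar>" lebesgue]
  unfolding energy_def by (simp add: zero_ennreal.rep_eq)

lemma energy_f_zero: "energy \<Omega> f l1 l2 f (\<lambda>x. 0) = total_variation \<Omega> f"
  unfolding energy_def by (simp add: zero_ennreal.rep_eq)

lemma optimal_pair_L1_norm_le:
  assumes "L2 \<Omega> f" "optimal_pair \<Omega> f l1 l2 u v" "l1 > 0" "l2 > 0"
  shows "(LINT x:\<Omega>|lebesgue. \<bar>v x\<bar>) \<le> l2 / 2 * (LINT x:\<Omega>|lebesgue. (f x)\<^sup>2) / l1"
proof (rule set_integral_real_bounded)
  show "0 \<le> l2 / 2 * (LINT x:\<Omega>|lebesgue. (f x)\<^sup>2) / l1"
    using assms(3,4) by (simp add: set_lebesgue_integral_nonneg)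
  show "(\<integral>\<^sup>+x\<in>\<Omega>. ennreal \<bar>v x\<bar> \<partial>lebesgue) \<le> ennreal (l2 / 2 * (LINT x:\<Omega>|lebesgue. (f x)\<^sup>2) / l1)"
    by (rule optimal_pair_bounds(1)[OF assms(2-4) BV_zero L2_zero])
      (simp add: energy_zero_zero[OF assms(1)])
qed

lemma optimal_pair_residual_le:
  assumes "\<Omega> \<in> lmeasurable" "L2 \<Omega> f" "optimal_pair \<Omega> f l1 l2 u v" "l1 > 0" "l2 > 0"
  shows "(LINT x:\<Omega>|lebesgue. (f x - u x - v x)\<^sup>2) \<le> 2 * (l1 * (LINT x:\<Omega>|lebesgue. \<bar>f x\<bar>)) / l2"
proof (rule set_integral_real_bounded)
  show "0 \<le> 2 * (l1 * (LINT x:\<Omega>|lebesgue. \<bar>f x\<bar>)) / l2"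
    using assms(4,5) by (simp add: set_lebesgue_integral_nonneg)
  show "(\<integral>\<^sup>+x\<in>\<Omega>. ennreal ((f x - u x - v x)\<^sup>2) \<partial>lebesgue)
      \<le> ennreal (2 * (l1 * (LINT x:\<Omega>|lebesgue. \<bar>f x\<bar>)) / l2)"
    by (rule optimal_pair_bounds(2)[OF assms(3-5) BV_zero assms(2)])
      (simp add: energy_zero_f[OF L2_imp_set_integrable_abs[OF assms(1,2)]])
qed

lemma optimal_pair_BV_data_bounds:
  assumes \<Omega>: "\<Omega> \<in> lmeasurable" and "BV \<Omega> f" "total_variation \<Omega> f = ereal T"
    and opt: "optimal_pair \<Omega> f l1 l2 u v" and "l1 > 0" "l2 > 0"
  shows "(LINT x:\<Omega>|lebesgue. \<bar>v x\<bar>) \<le> T / l1"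
    and "(LINT x:\<Omega>|lebesgue. \<bar>u x - f x\<bar>) \<le> T / l1 + (measure lebesgue \<Omega> / 2 + T) / sqrt l2"
proof -
  let ?M = "restrict_space lebesgue \<Omega>" and ?\<mu> = "measure lebesgue \<Omega>"
  have "0 \<le> T" using total_variation_nonneg[of \<Omega> f] assms(3) by simp
  have energy: "energy \<Omega> f l1 l2 f (\<lambda>x. 0) \<le> ereal T"
    using assms(3) by (simp add: energy_f_zero)
  note bounds = optimal_pair_bounds[OF opt \<open>l1 > 0\<close> \<open>l2 > 0\<close> \<open>BV \<Omega> f\<close> L2_zero energy]
  show "(LINT x:\<Omega>|lebesgue. \<bar>v x\<bar>) \<le> T / l1"
    using bounds(1) \<open>0 \<le> T\<close> \<open>l1 > 0\<close> by (intro set_integral_real_bounded) auto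
  have \<Omega>_sets: "\<Omega> \<in> sets lebesgue" using \<Omega> by (rule fmeasurableD)
  have [measurable]: "f \<in> borel_measurable ?M" "u \<in> borel_measurable ?M" "v \<in> borel_measurable ?M"
    using opt \<open>BV \<Omega> f\<close> BV_set_borel_measurable set_borel_measurable_iff_restrict_space[OF \<Omega>_sets]
    unfolding optimal_pair_def L2_def by blast+
  have "(\<integral>\<^sup>+x. \<bar>u x - f x\<bar> \<partial>?M) \<le>
      (\<integral>\<^sup>+x. \<bar>v x\<bar> \<partial>?M) + ennreal (1 / (2 * sqrt l2)) * emeasure ?M (space ?M)
        + ennreal (sqrt l2 / 2) * (\<integral>\<^sup>+x. (f x - u x - v x)\<^sup>2 \<partial>?M)"
    by (rule nn_integral_abs_le_Young) (use \<open>l2 > 0\<close> in auto)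
  then have "(\<integral>\<^sup>+x\<in>\<Omega>. \<bar>u x - f x\<bar> \<partial>lebesgue) \<le>
      (\<integral>\<^sup>+x\<in>\<Omega>. \<bar>v x\<bar> \<partial>lebesgue) + ennreal (1 / (2 * sqrt l2)) * emeasure lebesgue \<Omega>
        + ennreal (sqrt l2 / 2) * (\<integral>\<^sup>+x\<in>\<Omega>. (f x - u x - v x)\<^sup>2 \<partial>lebesgue)"
    using \<Omega>_sets by (simp only: nn_integral_restrict_space emeasure_restrict_space
      space_restrict_space2 Int_absorb2 order_refl sets.Int_space_eq2)
  also have "\<dots> \<le> ennreal (T / l1) + ennreal (1 / (2 * sqrt l2)) * ennreal ?\<mu>
        + ennreal (sqrt l2 / 2) * ennreal (2 * T / l2)"
    using bounds \<Omega> by (intro add_mono mult_left_mono order_refl) (auto simp: emeasure_eq_measure2)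
  also have "\<dots> = ennreal (T / l1 + (1 / (2 * sqrt l2) * ?\<mu> + sqrt l2 / 2 * (2 * T / l2)))"
    using \<open>0 \<le> T\<close> \<open>l1 > 0\<close> \<open>l2 > 0\<close> by (simp add: ennreal_plus ennreal_mult[symmetric] add.assoc)
  also have "1 / (2 * sqrt l2) * ?\<mu> + sqrt l2 / 2 * (2 * T / l2) = (?\<mu> / 2 + T) / sqrt l2"
  proof -
    have "sqrt l2 * sqrt l2 = l2" using \<open>l2 > 0\<close> by simp
    with \<open>l2 > 0\<close> show ?thesis by (simp add: divide_simps) (simp add: algebra_simps)
  qed
  finally show "(LINT x:\<Omega>|lebesgue. \<bar>u x - f x\<bar>) \<le> T / l1 + (?\<mu> / 2 + T) / sqrt l2"
    using \<open>0 \<le> T\<close> \<open>l1 > 0\<close> \<open>l2 > 0\<close> by (intro set_integral_real_bounded) auto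
qed

lemma tendsto_const_divide_at_top:
  fixes g :: "'a \<Rightarrow> real"
  shows "filterlim g at_top F \<Longrightarrow> ((\<lambda>x. c / g x) \<longlongrightarrow> 0) F"
  by (rule tendsto_divide_0[OF tendsto_const filterlim_at_top_imp_at_infinity])

theorem proposition5p1:
  fixes \<Omega> :: "R2 set" and f :: "R2 \<Rightarrow> real"
    and u v :: "real \<Rightarrow> real \<Rightarrow> R2 \<Rightarrow> real"
  assumes "open \<Omega>" and "bounded \<Omega>" and "lipschitz_boundary \<Omega>"
    and "L2 \<Omega> f" and "\<not> (AE x in lebesgue. x \<in> \<Omega> \<longrightarrow> f x = 0)"
    and opt: "\<And>l1 l2. l1 > 0 \<Longrightarrow> l2 > 0 \<Longrightarrow> optimal_pair \<Omega> f l1 l2 (u l1 l2) (v l1 l2)"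
  shows "(\<forall>l2>0. ((\<lambda>l1. LINT x:\<Omega>|lebesgue. \<bar>v l1 l2 x\<bar>) \<longlongrightarrow> 0) at_top) \<and>
         (\<forall>l1>0. ((\<lambda>l2. sqrt (LINT x:\<Omega>|lebesgue. (f x - u l1 l2 x - v l1 l2 x)\<^sup>2)) \<longlongrightarrow> 0) at_top) \<and>
         (BV \<Omega> f \<and> \<not> (\<exists>c. AE x in lebesgue. x \<in> \<Omega> \<longrightarrow> f x = c) \<longrightarrow>
         ((\<lambda>(l1, l2). LINT x:\<Omega>|lebesgue. \<bar>u l1 l2 x - f x\<bar>) \<longlongrightarrow> 0) (at_top \<times>\<^sub>F at_top)
       \<and> ((\<lambda>(l1, l2). LINT x:\<Omega>|lebesgue. \<bar>v l1 l2 x\<bar>) \<longlongrightarrow> 0) (at_top \<times>\<^sub>F at_top))"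
proof (intro conjI allI impI)
  fix l2 :: real assume "l2 > 0"
  have "\<forall>\<^sub>F l1 in at_top. norm (LINT x:\<Omega>|lebesgue. \<bar>v l1 l2 x\<bar>) \<le> l2 / 2 * (LINT x:\<Omega>|lebesgue. (f x)\<^sup>2) / l1"
    using eventually_gt_at_top[of 0] by eventually_elim
      (use optimal_pair_L1_norm_le[OF assms(4) opt] \<open>l2 > 0\<close> in \<open>simp add: set_lebesgue_integral_nonneg\<close>)
  then show "((\<lambda>l1. LINT x:\<Omega>|lebesgue. \<bar>v l1 l2 x\<bar>) \<longlongrightarrow> 0) at_top"
    by (rule Lim_null_comparison) (intro tendsto_const_divide_at_top filterlim_ident)
next
  fix l1 :: real assume "l1 > 0"
  have "\<forall>\<^sub>F l2 in at_top. norm (sqrt (LINT x:\<Omega>|lebesgue. (f x - u l1 l2 x - v l1 l2 x)\<^sup>2))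
      \<le> sqrt (2 * (l1 * (LINT x:\<Omega>|lebesgue. \<bar>f x\<bar>)) / l2)"
    using eventually_gt_at_top[of 0] by eventually_elim
      (use optimal_pair_residual_le[OF lmeasurable_open[OF assms(2,1)] assms(4) opt] \<open>l1 > 0\<close> in \<open>simp add: set_lebesgue_integral_nonneg\<close>)
  then show "((\<lambda>l2. sqrt (LINT x:\<Omega>|lebesgue. (f x - u l1 l2 x - v l1 l2 x)\<^sup>2)) \<longlongrightarrow> 0) at_top"
    by (rule Lim_null_comparison)
      (use tendsto_real_sqrt[OF tendsto_const_divide_at_top[OF filterlim_ident]] in simp)
next
  assume "BV \<Omega> f \<and> \<not> (\<exists>c. AE x in lebesgue. x \<in> \<Omega> \<longrightarrow> f x = c)"
  then have "BV \<Omega> f" ..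
  then obtain T where T: "total_variation \<Omega> f = ereal T" by (rule BV_total_variation_real)
  note bounds = optimal_pair_BV_data_bounds[OF lmeasurable_open[OF assms(2,1)] \<open>BV \<Omega> f\<close> T opt]
  let ?\<mu> = "measure lebesgue \<Omega>"
  have pos: "\<forall>\<^sub>F (p :: real \<times> real) in at_top \<times>\<^sub>F at_top. 0 < fst p \<and> 0 < snd p"
    by (rule eventually_prodI) (rule eventually_gt_at_top)+
  have "\<forall>\<^sub>F p in at_top \<times>\<^sub>F at_top. norm (case p of (l1, l2) \<Rightarrow> LINT x:\<Omega>|lebesgue. \<bar>u l1 l2 x - f x\<bar>)
      \<le> T / fst p + (?\<mu> / 2 + T) / sqrt (snd p)"
    using pos by eventually_elim (use bounds(2) in \<open>auto simp: set_lebesgue_integral_nonneg\<close>)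
  then show "((\<lambda>(l1, l2). LINT x:\<Omega>|lebesgue. \<bar>u l1 l2 x - f x\<bar>) \<longlongrightarrow> 0) (at_top \<times>\<^sub>F at_top)"
    by (rule Lim_null_comparison) (intro tendsto_add_zero tendsto_const_divide_at_top filterlim_fst
        filterlim_compose[OF sqrt_at_top filterlim_snd])
  have "\<forall>\<^sub>F p in at_top \<times>\<^sub>F at_top. norm (case p of (l1, l2) \<Rightarrow> LINT x:\<Omega>|lebesgue. \<bar>v l1 l2 x\<bar>) \<le> T / fst p"
    using pos by eventually_elim (use bounds(1) in \<open>auto simp: set_lebesgue_integral_nonneg\<close>)
  then show "((\<lambda>(l1, l2). LINT x:\<Omega>|lebesgue. \<bar>v l1 l2 x\<bar>) \<longlongrightarrow> 0) (at_top \<times>\<^sub>F at_top)"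
    by (rule Lim_null_comparison) (intro tendsto_const_divide_at_top filterlim_fst)
qed

end
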